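(* Let $0\leq A<B$ be integers. There exist integers $L\geq 2$ and $a_j,b_j$ for $2\leq j\leq L$ such that \[ A=a_2\leq\cdots\leq a_L=b_L\leq\cdots\leq b_2=B, \] with $\varepsilon_i(a_j)=\varepsilon_i(b_j)=0$ for $2\leq i<j\leq L$, and $a_{j+1}-a_j\in\{0,F_{j-1}\}$ and $b_j-b_{j+1}\in\{0,F_j\}$ for $2\leq j<L$.
   Context: Let $F_0=0$, $F_1=1$, $F_k=F_{k-1}+F_{k-2}$ be the Fibonacci numbers. Every positive integer $n$ has a unique (Zeckendorf) representation $n=\sum_{i\geq 2}\varepsilon_i(n)F_i$ with $\varepsilon_i(n)\in\{0,1\}$ and $\varepsilon_i(n)=1\Rightarrow\varepsilon_{i+1}(n)=0$; for $n=0$ all $\varepsilon_i(0)=0$. *)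

theory Defs
  imports "HOL-Number_Theory.Fib"
begin

definition zeck_rep :: "nat \<Rightarrow> nat set \<Rightarrow> bool" where
  "zeck_rep n S \<longleftrightarrow> finite S \<and> (\<forall>i\<in>S. 2 \<le> i \<and> Suc i \<notin> S) \<and> (\<Sum>i\<in>S. fib i) = n"

definition zeck_set :: "nat \<Rightarrow> nat set" where
  "zeck_set n = (THE S. zeck_rep n S)"

definition zeck_digit :: "nat \<Rightarrow> nat \<Rightarrow> nat" where
  "zeck_digit i n = (if i \<in> zeck_set n then 1 else 0)"

end

theory Submission
  imports Defs
begin

text \<open>The Zeckendorf digits of \<open>n\<close> vanish below \<open>k\<close> exactly when \<open>n\<close> is a sum of
non-consecutive \<open>F\<^sub>i\<close> with \<open>i \<ge> k\<close>, and two distinct such numbers differ by at least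
\<open>F\<^sub>k\<^sub>-\<^sub>1\<close>, because a sum of non-consecutive \<open>F\<^sub>i\<close> with \<open>k \<le> i < m\<close> is at most
\<open>F\<^sub>m - F\<^sub>k\<^sub>-\<^sub>1\<close>. Starting from \<open>a\<^sub>2 = A\<close> and \<open>b\<^sub>2 = B\<close>, step \<open>j\<close> clears digit \<open>j\<close>: \<open>a\<^sub>j\<close> is
rounded up by adding \<open>F\<^sub>j\<^sub>-\<^sub>1\<close> (turning \<open>F\<^sub>j\<close> into \<open>F\<^sub>j\<^sub>+\<^sub>1\<close>, which is then carried upwards),
\<open>b\<^sub>j\<close> is rounded down by deleting \<open>F\<^sub>j\<close>. A case analysis with the gap property shows that
rounding preserves \<open>a\<^sub>j \<le> b\<^sub>j\<close>. As long as \<open>a\<^sub>j < b\<^sub>j\<close>, the gap gives \<open>b\<^sub>j \<ge> F\<^sub>j\<^sub>-\<^sub>1\<close>,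
which is impossible for large \<open>j\<close> since \<open>b\<^sub>j \<le> B\<close>; so the sequences meet.\<close>

lemma fib_Suc_eq_add_pred: "0 < j \<Longrightarrow> fib (Suc j) = fib j + fib (j - 1)"
  by (cases j) simp_all

lemma fib_index_less: "n < fib (n + 2)"
proof (induction n)
  case (Suc n)
  have "0 < fib (Suc n)" by (simp add: fib_neq_0_nat)
  then show ?case using Suc by (simp add: fib_plus_2[of "Suc n"])
qed simp

definition zeck_from :: "nat \<Rightarrow> nat set \<Rightarrow> bool" where
  "zeck_from k S \<longleftrightarrow> finite S \<and> (\<forall>i\<in>S. 2 \<le> i \<and> k \<le> i \<and> Suc i \<notin> S)"

lemma zeck_from_mono: "zeck_from k S \<Longrightarrow> k' \<le> k \<Longrightarrow> zeck_from k' S"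
  unfolding zeck_from_def by auto

lemma zeck_from_Diff: "zeck_from k S \<Longrightarrow> zeck_from k (S - X)"
  unfolding zeck_from_def by auto

lemma zeck_from_Suc: "zeck_from k S \<Longrightarrow> k \<notin> S \<Longrightarrow> zeck_from (Suc k) S"
  unfolding zeck_from_def by (auto simp: Suc_le_eq order_le_less)

lemma zeck_from_remove_least:
  assumes "zeck_from k S" "k \<in> S"
  shows "zeck_from (Suc (Suc k)) (S - {k})"
proof -
  have "Suc k \<notin> S" using assms by (simp add: zeck_from_def)
  then have "Suc (Suc k) \<le> i" if "i \<in> S - {k}" for i
    using that assms unfolding zeck_from_def by (metis DiffE insertI1 le_antisym not_less_eq_eq)
  then show ?thesis using assms unfolding zeck_from_def by auto
qed

lemma zeck_sum_bound:
  assumes "zeck_from k S" "\<forall>i\<in>S. i < m" "2 \<le> k" "k \<le> Suc m"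
  shows "sum fib S + fib (k - 1) \<le> fib m"
  using assms
proof (induction m arbitrary: S rule: less_induct)
  case (less m)
  consider "S = {}" | "S \<noteq> {}" "m - 1 \<notin> S" | "m - 1 \<in> S" by blast
  then show ?case
  proof cases
    case 1
    then show ?thesis using fib_mono[of "k - 1" m] less.prems(4) by simp
  next
    case 2
    then obtain j where "j \<in> S" by blast
    then have "k < m" using less.prems(1,2) by (fastforce simp: zeck_from_def)
    have "i < m - 1" if "i \<in> S" for i
    proof -
      have "i < m" "i \<noteq> m - 1" using that 2 less.prems(2) by auto
      then show ?thesis by linarith
    qed
    then have "sum fib S + fib (k - 1) \<le> fib (m - 1)"
      using \<open>k < m\<close> less.prems(1,3) by (intro less.IH) auto
    then show ?thesis using fib_mono[of "m - 1" m] by simp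
  next
    case 3
    have "k \<le> m - 1" "m - 1 < m" using 3 less.prems(1,2) by (auto simp: zeck_from_def)
    then have "Suc (m - 2) = m - 1" using less.prems(3) by simp
    then have "m - 2 \<notin> S" using 3 less.prems(1) unfolding zeck_from_def by metis
    have rest: "i < m - 2" if "i \<in> S - {m - 1}" for i
    proof -
      have "i < m" "i \<noteq> m - 1" "i \<noteq> m - 2"
        using that less.prems(2) \<open>m - 2 \<notin> S\<close> by auto
      then show ?thesis by linarith
    qed
    have "sum fib (S - {m - 1}) + fib (k - 1) \<le> fib (m - 2)"
    proof (rule less.IH)
      show "m - 2 < m" "k \<le> Suc (m - 2)"
        using \<open>k \<le> m - 1\<close> \<open>Suc (m - 2) = m - 1\<close> by linarith+
    qed (use rest less.prems(1,3) zeck_from_Diff in auto)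
    moreover have "sum fib S = fib (m - 1) + sum fib (S - {m - 1})"
      using less.prems(1) 3 by (simp add: zeck_from_def sum.remove)
    moreover have "fib m = fib (m - 1) + fib (m - 2)"
      using fib_Suc_eq_add_pred[of "m - 1"] \<open>k \<le> m - 1\<close> less.prems(3) by (simp add: numeral_2_eq_2)
    ultimately show ?thesis by simp
  qed
qed

lemma fib_le_zeck_sum: "zeck_from k S \<Longrightarrow> i \<in> S \<Longrightarrow> fib i \<le> sum fib S"
  by (simp add: zeck_from_def member_le_sum)

lemma zeck_sum_less_fib:
  assumes "zeck_from 2 S" "\<forall>i\<in>S. i < m" "0 < m"
  shows "sum fib S < fib m"
  using zeck_sum_bound[OF assms(1,2)] assms(3) by simp

lemma zeck_sum_eq_0_iff:
  assumes "zeck_from k S"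
  shows "sum fib S = 0 \<longleftrightarrow> S = {}"
proof
  assume "sum fib S = 0"
  then have "fib i = 0" if "i \<in> S" for i using fib_le_zeck_sum[OF assms that] by simp
  moreover have "0 < i" if "i \<in> S" for i using assms that by (auto simp: zeck_from_def)
  ultimately show "S = {}" using fib_neq_0_nat by (metis ex_in_conv less_irrefl)
qed simp

lemma zeck_sum_gap_Max_notin:
  assumes S: "zeck_from k S" and T: "zeck_from k T" and "2 \<le> k"
    and "m \<in> T" "\<forall>i\<in>T. i \<le> m" "m \<notin> S" and le: "sum fib S \<le> sum fib T"
  shows "sum fib S + fib (k - 1) \<le> sum fib T"
proof -
  have S_below: "i < m" if "i \<in> S" for i
  proof (rule ccontr)
    assume "\<not> i < m"
    then have "m < i" using \<open>m \<notin> S\<close> that by (cases "i = m") auto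
    then have "\<forall>j\<in>T. j < i" using \<open>\<forall>i\<in>T. i \<le> m\<close> by fastforce
    moreover have "zeck_from 2 T" using T \<open>2 \<le> k\<close> by (rule zeck_from_mono)
    ultimately have "sum fib T < fib i" using zeck_sum_less_fib[of T i] \<open>m < i\<close> by simp
    also have "fib i \<le> sum fib S" using S that by (rule fib_le_zeck_sum)
    finally show False using le by simp
  qed
  have "k \<le> m" using \<open>m \<in> T\<close> T by (simp add: zeck_from_def)
  then have "sum fib S + fib (k - 1) \<le> fib m"
    using zeck_sum_bound[OF S] S_below \<open>2 \<le> k\<close> by simp
  also have "fib m \<le> sum fib T" using T \<open>m \<in> T\<close> by (rule fib_le_zeck_sum)
  finally show ?thesis .
qed

lemma zeck_sum_le_cases:
  assumes "zeck_from k S" "zeck_from k T" "2 \<le> k" "sum fib S \<le> sum fib T"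
  shows "S = T \<or> sum fib S + fib (k - 1) \<le> sum fib T"
  using assms
proof (induction "card T" arbitrary: S T rule: less_induct)
  case less
  have finS: "finite S" and finT: "finite T" using less.prems by (auto simp: zeck_from_def)
  show ?case
  proof (cases "T = {}")
    case True
    then have "sum fib S = 0" using less.prems(4) by simp
    then show ?thesis using zeck_sum_eq_0_iff[OF less.prems(1)] True by simp
  next
    case False
    define m where "m = Max T"
    have mT: "m \<in> T" and m_max: "\<forall>i\<in>T. i \<le> m" using finT False by (simp_all add: m_def)
    show ?thesis
    proof (cases "m \<in> S")
      case True
      have split: "sum fib S = fib m + sum fib (S - {m})" "sum fib T = fib m + sum fib (T - {m})"
        using finS finT True mT by (simp_all add: sum.remove)
      have "card (T - {m}) < card T" using finT mT by (rule card_Diff1_less)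
      then have "S - {m} = T - {m} \<or> sum fib (S - {m}) + fib (k - 1) \<le> sum fib (T - {m})"
        using less.hyps[of "T - {m}" "S - {m}"] less.prems split zeck_from_Diff by simp
      then show ?thesis
      proof
        assume "S - {m} = T - {m}"
        then show ?thesis using True mT by (metis insert_Diff)
      qed (use split in simp)
    next
      case False
      then show ?thesis using zeck_sum_gap_Max_notin less.prems mT m_max by blast
    qed
  qed
qed

lemma zeck_from_sum_inj:
  "zeck_from 2 S \<Longrightarrow> zeck_from 2 T \<Longrightarrow> sum fib S = sum fib T \<Longrightarrow> S = T"
  using zeck_sum_le_cases[of 2 S T] by simp

lemma zeck_rep_iff: "zeck_rep n S \<longleftrightarrow> zeck_from 2 S \<and> sum fib S = n"
  unfolding zeck_rep_def zeck_from_def by auto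

lemma zeck_set_sum: "zeck_from k S \<Longrightarrow> zeck_set (sum fib S) = S"
  unfolding zeck_set_def
proof (rule the_equality)
  assume "zeck_from k S"
  then show S2: "zeck_rep (sum fib S) S" by (simp add: zeck_rep_iff zeck_from_def)
  fix T assume "zeck_rep (sum fib S) T"
  with S2 show "T = S" by (simp add: zeck_rep_iff zeck_from_sum_inj)
qed

lemma fib_bracket: "1 \<le> n \<Longrightarrow> \<exists>m\<ge>2. fib m \<le> n \<and> n < fib (Suc m)"
proof (induction n rule: dec_induct)
  case base
  show ?case by (rule exI[of _ 2]) (simp add: numeral_eq_Suc)
next
  case (step n)
  then obtain m where m: "2 \<le> m" "fib m \<le> n" "n < fib (Suc m)" by blast
  show ?case
  proof (cases "Suc n < fib (Suc m)")
    case True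
    then show ?thesis using m by auto
  next
    case False
    then have "Suc n = fib (Suc m)" using m by simp
    moreover have "0 < fib m" using m by (simp add: fib_neq_0_nat)
    ultimately show ?thesis using m by (intro exI[of _ "Suc m"]) auto
  qed
qed

lemma zeck_from_exists: "\<exists>S. zeck_from 2 S \<and> sum fib S = n"
proof (induction n rule: less_induct)
  case (less n)
  show ?case
  proof (cases "n = 0")
    case True
    then show ?thesis by (intro exI[of _ "{}"]) (simp add: zeck_from_def)
  next
    case False
    then obtain m where m: "2 \<le> m" "fib m \<le> n" "n < fib (Suc m)" using fib_bracket[of n] by auto
    have "0 < fib m" using m by (simp add: fib_neq_0_nat)
    then obtain T where T: "zeck_from 2 T" "sum fib T = n - fib m"
      using less.IH[of "n - fib m"] m by auto
    have small: "sum fib T < fib (m - 1)" using T m fib_Suc_eq_add_pred[of m] by simp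
    have T_below: "i < m - 1" if "i \<in> T" for i
    proof (rule ccontr)
      assume "\<not> i < m - 1"
      then have "fib (m - 1) \<le> fib i" by (simp add: fib_mono)
      also have "\<dots> \<le> sum fib T" using T(1) that by (rule fib_le_zeck_sum)
      finally show False using small by simp
    qed
    then have "zeck_from 2 (insert m T)" using T(1) m(1) by (fastforce simp: zeck_from_def)
    moreover have "m \<notin> T" using T_below by fastforce
    then have "sum fib (insert m T) = n" using T m by (simp add: zeck_from_def)
    ultimately show ?thesis by blast
  qed
qed

text \<open>Carrying, via \<open>F\<^sub>k + F\<^sub>k\<^sub>+\<^sub>1 = F\<^sub>k\<^sub>+\<^sub>2\<close>.\<close>

lemma zeck_from_add_fib:
  assumes "zeck_from (Suc k) T" "2 \<le> k"
  shows "\<exists>U. zeck_from k U \<and> sum fib U = fib k + sum fib T"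
  using assms
proof (induction "card T" arbitrary: T k rule: less_induct)
  case less
  have finT: "finite T" using less.prems(1) by (simp add: zeck_from_def)
  show ?case
  proof (cases "Suc k \<in> T")
    case False
    have "k \<notin> T" using less.prems(1) by (auto simp: zeck_from_def)
    then have "zeck_from k (insert k T) \<and> sum fib (insert k T) = fib k + sum fib T"
      using less.prems False finT by (auto simp: zeck_from_def)
    then show ?thesis by blast
  next
    case True
    have rest: "zeck_from (Suc (Suc (Suc k))) (T - {Suc k})"
      using less.prems(1) True by (rule zeck_from_remove_least)
    have "card (T - {Suc k}) < card T" using finT True by (rule card_Diff1_less)
    then obtain U where U: "zeck_from (Suc (Suc k)) U"
      "sum fib U = fib (Suc (Suc k)) + sum fib (T - {Suc k})"
      using less.hyps[of "T - {Suc k}" "Suc (Suc k)"] rest less.prems(2) by auto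
    have "sum fib T = fib (Suc k) + sum fib (T - {Suc k})" using finT True by (simp add: sum.remove)
    then have "sum fib U = fib k + sum fib T" using U by simp
    moreover have "zeck_from k U" using U(1) by (rule zeck_from_mono) simp
    ultimately show ?thesis by blast
  qed
qed

definition zeck_vanishes_below :: "nat \<Rightarrow> nat \<Rightarrow> bool" where
  "zeck_vanishes_below k n \<longleftrightarrow> (\<exists>S. zeck_from k S \<and> sum fib S = n)"

lemma zeck_vanishes_below_2: "zeck_vanishes_below 2 n"
  using zeck_from_exists by (simp add: zeck_vanishes_below_def)

lemma zeck_vanishes_below_mono:
  "zeck_vanishes_below k n \<Longrightarrow> k' \<le> k \<Longrightarrow> zeck_vanishes_below k' n"
  unfolding zeck_vanishes_below_def using zeck_from_mono by blast

lemma zeck_from_zeck_set: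
  "zeck_vanishes_below k n \<Longrightarrow> zeck_from k (zeck_set n) \<and> sum fib (zeck_set n) = n"
  unfolding zeck_vanishes_below_def using zeck_set_sum by metis

lemma zeck_digit_below: "zeck_vanishes_below j n \<Longrightarrow> i < j \<Longrightarrow> zeck_digit i n = 0"
  using zeck_from_zeck_set by (fastforce simp: zeck_digit_def zeck_from_def)

lemma zeck_vanishes_below_Suc:
  "zeck_vanishes_below k n \<Longrightarrow> k \<notin> zeck_set n \<Longrightarrow> zeck_vanishes_below (Suc k) n"
  by (metis zeck_from_zeck_set zeck_from_Suc zeck_vanishes_below_def)

lemma zeck_vanishes_below_diff_fib:
  assumes "zeck_vanishes_below k n" "k \<in> zeck_set n"
  shows "fib k \<le> n \<and> zeck_vanishes_below (Suc (Suc k)) (n - fib k)"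
proof -
  have S: "zeck_from k (zeck_set n)" "sum fib (zeck_set n) = n"
    using zeck_from_zeck_set[OF assms(1)] by auto
  then have "n = fib k + sum fib (zeck_set n - {k})"
    using assms(2) by (simp add: zeck_from_def sum.remove)
  then show ?thesis
    using zeck_from_remove_least[OF S(1) assms(2)] unfolding zeck_vanishes_below_def by auto
qed

lemma zeck_vanishes_below_add_fib:
  "zeck_vanishes_below (Suc k) n \<Longrightarrow> 2 \<le> k \<Longrightarrow> zeck_vanishes_below k (fib k + n)"
  unfolding zeck_vanishes_below_def using zeck_from_add_fib by blast

lemma zeck_vanishes_below_gap:
  assumes "zeck_vanishes_below k x" "zeck_vanishes_below k y" "2 \<le> k" "x < y"
  shows "x + fib (k - 1) \<le> y"
proof -
  obtain S T where "zeck_from k S" "zeck_from k T" "sum fib S = x" "sum fib T = y"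
    using assms(1,2) unfolding zeck_vanishes_below_def by blast
  then show ?thesis using zeck_sum_le_cases[of k S T] assms(3,4) by auto
qed

definition zeck_round_up :: "nat \<Rightarrow> nat \<Rightarrow> nat" where
  "zeck_round_up j n = (if j \<in> zeck_set n then n + fib (j - 1) else n)"

definition zeck_round_down :: "nat \<Rightarrow> nat \<Rightarrow> nat" where
  "zeck_round_down j n = (if j \<in> zeck_set n then n - fib j else n)"

lemma zeck_vanishes_below_round_up:
  assumes "zeck_vanishes_below j n" "2 \<le> j"
  shows "zeck_vanishes_below (Suc j) (zeck_round_up j n)"
proof (cases "j \<in> zeck_set n")
  case True
  then have "fib j \<le> n" "zeck_vanishes_below (Suc (Suc j)) (n - fib j)"
    using zeck_vanishes_below_diff_fib assms(1) by auto
  then have "zeck_vanishes_below (Suc j) (fib (Suc j) + (n - fib j))"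
    using zeck_vanishes_below_add_fib[of "Suc j" "n - fib j"] assms(2) by simp
  moreover have "fib (Suc j) + (n - fib j) = n + fib (j - 1)"
    using fib_Suc_eq_add_pred[of j] assms(2) \<open>fib j \<le> n\<close> by simp
  ultimately show ?thesis using True by (simp add: zeck_round_up_def)
next
  case False
  then show ?thesis using zeck_vanishes_below_Suc assms(1) by (simp add: zeck_round_up_def)
qed

lemma zeck_vanishes_below_round_down:
  assumes "zeck_vanishes_below j n"
  shows "zeck_vanishes_below (Suc j) (zeck_round_down j n)"
proof (cases "j \<in> zeck_set n")
  case True
  then have "zeck_vanishes_below (Suc (Suc j)) (n - fib j)"
    using zeck_vanishes_below_diff_fib assms by auto
  then show ?thesis using True zeck_vanishes_below_mono by (simp add: zeck_round_down_def)
next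
  case False
  then show ?thesis using zeck_vanishes_below_Suc assms by (simp add: zeck_round_down_def)
qed

lemma zeck_round_up_le_round_down:
  assumes x: "zeck_vanishes_below j x" and y: "zeck_vanishes_below j y"
    and "2 \<le> j" "x < y"
  shows "zeck_round_up j x \<le> zeck_round_down j y"
proof (cases "j \<in> zeck_set x"; cases "j \<in> zeck_set y")
  assume jx: "j \<in> zeck_set x" and jy: "j \<in> zeck_set y"
  have x': "fib j \<le> x" "zeck_vanishes_below (Suc (Suc j)) (x - fib j)"
    using zeck_vanishes_below_diff_fib[OF x jx] by auto
  have y': "fib j \<le> y" "zeck_vanishes_below (Suc (Suc j)) (y - fib j)"
    using zeck_vanishes_below_diff_fib[OF y jy] by auto
  have "x - fib j + fib (Suc j) \<le> y - fib j"
    using zeck_vanishes_below_gap[OF x'(2) y'(2)] x'(1) \<open>x < y\<close> by simp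
  then show ?thesis
    using jx jy x'(1) fib_Suc_eq_add_pred[of j] \<open>2 \<le> j\<close>
    by (simp add: zeck_round_up_def zeck_round_down_def)
next
  assume "j \<in> zeck_set x" "j \<notin> zeck_set y"
  then show ?thesis using zeck_vanishes_below_gap[OF x y] assms(3,4)
    by (simp add: zeck_round_up_def zeck_round_down_def)
next
  assume jx: "j \<notin> zeck_set x" and jy: "j \<in> zeck_set y"
  have y': "fib j \<le> y" "zeck_vanishes_below (Suc (Suc j)) (y - fib j)"
    using zeck_vanishes_below_diff_fib[OF y jy] by auto
  have "x \<le> y - fib j"
  proof (rule ccontr)
    assume "\<not> x \<le> y - fib j"
    then have "y - fib j + fib (Suc j - 1) \<le> x"
      using zeck_vanishes_below_gap[OF zeck_vanishes_below_mono[OF y'(2)]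
          zeck_vanishes_below_Suc[OF x jx]] assms(3) by simp
    then show False using y'(1) \<open>x < y\<close> by simp
  qed
  then show ?thesis using jx jy by (simp add: zeck_round_up_def zeck_round_down_def)
next
  assume "j \<notin> zeck_set x" "j \<notin> zeck_set y"
  then show ?thesis using \<open>x < y\<close> by (simp add: zeck_round_up_def zeck_round_down_def)
qed

fun zeck_ascent :: "nat \<Rightarrow> nat \<Rightarrow> nat" where
  "zeck_ascent A 0 = A"
| "zeck_ascent A (Suc j) =
    (if 2 \<le> j then zeck_round_up j (zeck_ascent A j) else zeck_ascent A j)"

fun zeck_descent :: "nat \<Rightarrow> nat \<Rightarrow> nat" where
  "zeck_descent B 0 = B"
| "zeck_descent B (Suc j) =
    (if 2 \<le> j then zeck_round_down j (zeck_descent B j) else zeck_descent B j)"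

lemma zeck_ascent_2: "zeck_ascent A 2 = A"
  by (simp add: numeral_eq_Suc)

lemma zeck_descent_2: "zeck_descent B 2 = B"
  by (simp add: numeral_eq_Suc)

lemma zeck_vanishes_below_ascent: "2 \<le> j \<Longrightarrow> zeck_vanishes_below j (zeck_ascent A j)"
proof (induction j rule: dec_induct)
  case base
  show ?case by (rule zeck_vanishes_below_2)
next
  case (step j)
  then show ?case by (simp add: zeck_vanishes_below_round_up)
qed

lemma zeck_vanishes_below_descent: "2 \<le> j \<Longrightarrow> zeck_vanishes_below j (zeck_descent B j)"
proof (induction j rule: dec_induct)
  case base
  show ?case by (rule zeck_vanishes_below_2)
next
  case (step j)
  then show ?case by (simp add: zeck_vanishes_below_round_down)
qed

lemma zeck_descent_le: "zeck_descent B j \<le> B"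
  by (induction j) (auto simp: zeck_round_down_def)

lemma zeck_ascent_descent_meet:
  assumes "A < B"
  shows "\<exists>L\<ge>2. zeck_ascent A L = zeck_descent B L"
proof (rule ccontr)
  assume apart: "\<not> ?thesis"
  have less: "zeck_ascent A j < zeck_descent B j" if "2 \<le> j" for j
    using that
  proof (induction j rule: dec_induct)
    case base
    then show ?case using assms by (simp add: zeck_ascent_2 zeck_descent_2)
  next
    case (step j)
    then have "zeck_ascent A (Suc j) \<le> zeck_descent B (Suc j)"
      using zeck_round_up_le_round_down zeck_vanishes_below_ascent zeck_vanishes_below_descent
      by simp
    moreover have "zeck_ascent A (Suc j) \<noteq> zeck_descent B (Suc j)"
      using apart step(1) by (metis le_SucI)
    ultimately show ?case by simp
  qed
  have "zeck_ascent A (B + 3) + fib (B + 2) \<le> zeck_descent B (B + 3)"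
    using zeck_vanishes_below_gap[OF zeck_vanishes_below_ascent zeck_vanishes_below_descent,
        of "B + 3" A B] less[of "B + 3"] by simp
  then have "fib (B + 2) \<le> zeck_descent B (B + 3)" by simp
  also have "\<dots> \<le> B" by (rule zeck_descent_le)
  finally show False using fib_index_less[of B] by simp
qed

theorem lemma5:
  fixes A B :: nat
  assumes "A < B"
  shows "\<exists>L::nat. \<exists>a b :: nat \<Rightarrow> nat. L \<ge> 2 \<and>
    a 2 = A \<and> b 2 = B \<and> a L = b L \<and>
    (\<forall>j. 2 \<le> j \<and> j < L \<longrightarrow> a j \<le> a (Suc j) \<and> b (Suc j) \<le> b j) \<and>
    (\<forall>i j. 2 \<le> i \<and> i < j \<and> j \<le> L \<longrightarrow> zeck_digit i (a j) = 0 \<and> zeck_digit i (b j) = 0) \<and>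
    (\<forall>j. 2 \<le> j \<and> j < L \<longrightarrow>
        (a (Suc j) = a j \<or> a (Suc j) = a j + fib (j - 1)) \<and>
        (b j = b (Suc j) \<or> b j = b (Suc j) + fib j))"
proof -
  obtain L where L: "2 \<le> L" "zeck_ascent A L = zeck_descent B L"
    using zeck_ascent_descent_meet[OF assms] by blast
  let ?a = "zeck_ascent A" and ?b = "zeck_descent B"
  have digits: "zeck_digit i (?a j) = 0 \<and> zeck_digit i (?b j) = 0" if "2 \<le> i" "i < j" for i j
  proof -
    have "2 \<le> j" using that by simp
    then show ?thesis using that(2) zeck_digit_below zeck_vanishes_below_ascent
        zeck_vanishes_below_descent by blast
  qed
  have descent_step: "?b j = ?b (Suc j) \<or> ?b j = ?b (Suc j) + fib j" if "2 \<le> j" for j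
    using that zeck_vanishes_below_diff_fib[OF zeck_vanishes_below_descent[OF that]]
    by (auto simp: zeck_round_down_def)
  show ?thesis
    using L digits descent_step
    by (intro exI[of _ L] exI[of _ ?a] exI[of _ ?b])
      (auto simp: zeck_ascent_2 zeck_descent_2 zeck_round_up_def zeck_round_down_def)
qed

end
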